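(* Let $A\subset\mathbb{R}$ be a Lebesgue measurable set and $a\in\mathbb{R}$. Then the following are equivalent: (i) every function $f:A\to\mathbb{R}$ which has a $T_6$ limit at $a$ has exactly one $T_6$ limit at $a$ (i.e. if $T_6\lim_{x\to a}f(x)=L_1$ and $T_6\lim_{x\to a}f(x)=L_2$ then $L_1=L_2$); (ii) $\left|\left((a-\delta,a+\delta)\setminus\{a\}\right)\cap A\right|>0$ for every real $\delta>0$.
   Context: $|K|$ denotes the Lebesgue measure of $K\subset\mathbb{R}$ (a set of measure zero means a Lebesgue null set, i.e. Lebesgue outer measure zero). For $A\subset\mathbb{R}$, $f:A\to\mathbb{R}$ and $a,L\in\mathbb{R}$, one writes $T_6\lim_{x\to a}f(x)=L$ if for every real $\varepsilon>0$ there exists a real $\delta_\varepsilon>0$ such that $\left|\left\{x\in\left((a-\delta_{\varepsilon},a+\delta_{\varepsilon})\setminus\{a\}\right)\cap A:\ |f(x)-L|\geq\varepsilon\right\}\right|=0$. *)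

theory Defs
  imports "HOL-Analysis.Analysis"
begin

text \<open>T6 limit: for every eps > 0 there is delta > 0 such that the set of points of the
punctured delta-neighbourhood of a lying in A where |f x - L| >= eps is a Lebesgue null set
(Lebesgue outer measure zero; lebesgue is complete so this is membership in null_sets lebesgue).
Only the values of f on A matter.\<close>
definition T6_lim :: "real set \<Rightarrow> (real \<Rightarrow> real) \<Rightarrow> real \<Rightarrow> real \<Rightarrow> bool" where
  "T6_lim A f a L \<longleftrightarrow>
     (\<forall>\<epsilon>>0. \<exists>\<delta>>0.
        {x \<in> ({a - \<delta> <..< a + \<delta>} - {a}) \<inter> A. \<bar>f x - L\<bar> \<ge> \<epsilon>} \<in> null_sets lebesgue)"

end

theory Submission
  imports Defs
begin

text \<open>If A is null near a, every condition in the definition of T6_lim holds vacuously, so every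
real is a limit of every function. Conversely, if two distinct limits L1, L2 exist, then with
\<epsilon> = |L1 - L2|/2 every point of A near a lies in one of the two exceptional null sets, so A is null
near a. Measurability of A is needed only because emeasure of a non-measurable set is 0.\<close>

lemma null_nbhd_imp_T6_lim:
  assumes "d > 0" and "({a - d <..< a + d} - {a}) \<inter> A \<in> null_sets lebesgue"
  shows "T6_lim A f a L"
  unfolding T6_lim_def
proof (intro allI impI exI conjI)
  fix \<epsilon> :: real
  show "d > 0" by (fact assms(1))
  show "{x \<in> ({a - d <..< a + d} - {a}) \<inter> A. \<bar>f x - L\<bar> \<ge> \<epsilon>} \<in> null_sets lebesgue"
    by (rule null_sets_completion_subset[OF _ assms(2)]) blast
qed

lemma T6_lim_distinct_imp_null_nbhd:
  assumes L1: "T6_lim A f a L1" and L2: "T6_lim A f a L2" and "L1 \<noteq> L2"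
  obtains d where "d > 0" and "({a - d <..< a + d} - {a}) \<inter> A \<in> null_sets lebesgue"
proof -
  define \<epsilon> where "\<epsilon> = \<bar>L1 - L2\<bar> / 2"
  have "\<epsilon> > 0" using \<open>L1 \<noteq> L2\<close> by (simp add: \<epsilon>_def)
  obtain d1 where "d1 > 0"
    and N1: "{x \<in> ({a - d1 <..< a + d1} - {a}) \<inter> A. \<bar>f x - L1\<bar> \<ge> \<epsilon>} \<in> null_sets lebesgue"
    using L1 \<open>\<epsilon> > 0\<close> unfolding T6_lim_def by blast
  obtain d2 where "d2 > 0"
    and N2: "{x \<in> ({a - d2 <..< a + d2} - {a}) \<inter> A. \<bar>f x - L2\<bar> \<ge> \<epsilon>} \<in> null_sets lebesgue"
    using L2 \<open>\<epsilon> > 0\<close> unfolding T6_lim_def by blast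
  define d where "d = min d1 d2"
  have "\<bar>f x - L1\<bar> \<ge> \<epsilon> \<or> \<bar>f x - L2\<bar> \<ge> \<epsilon>" for x
    unfolding \<epsilon>_def by (auto simp: abs_if)
  then have "({a - d <..< a + d} - {a}) \<inter> A \<subseteq>
      {x \<in> ({a - d1 <..< a + d1} - {a}) \<inter> A. \<bar>f x - L1\<bar> \<ge> \<epsilon>} \<union>
      {x \<in> ({a - d2 <..< a + d2} - {a}) \<inter> A. \<bar>f x - L2\<bar> \<ge> \<epsilon>}"
    by (auto simp: d_def)
  then have "({a - d <..< a + d} - {a}) \<inter> A \<in> null_sets lebesgue"
    using N1 N2 by (blast intro: null_sets_completion_subset)
  moreover have "d > 0" using \<open>d1 > 0\<close> \<open>d2 > 0\<close> by (simp add: d_def)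
  ultimately show thesis using that by blast
qed

theorem theorem5:
  fixes A :: "real set" and a :: real
  assumes "A \<in> sets lebesgue"
  shows "(\<forall>f L1 L2. T6_lim A f a L1 \<and> T6_lim A f a L2 \<longrightarrow> L1 = L2) \<longleftrightarrow>
         (\<forall>\<delta>>0. emeasure lebesgue (({a - \<delta> <..< a + \<delta>} - {a}) \<inter> A) > 0)"
proof
  assume unique: "\<forall>f L1 L2. T6_lim A f a L1 \<and> T6_lim A f a L2 \<longrightarrow> L1 = L2"
  show "\<forall>\<delta>>0. emeasure lebesgue (({a - \<delta> <..< a + \<delta>} - {a}) \<inter> A) > 0"
  proof (intro allI impI)
    fix d :: real
    assume "d > 0"
    \<comment> \<open>otherwise the zero function would have both limits 0 and 1\<close>
    have "({a - d <..< a + d} - {a}) \<inter> A \<notin> null_sets lebesgue"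
      using unique null_nbhd_imp_T6_lim[OF \<open>d > 0\<close>, of a A "\<lambda>_. 0"] by force
    moreover have "({a - d <..< a + d} - {a}) \<inter> A \<in> sets lebesgue"
      using assms by auto
    ultimately show "emeasure lebesgue (({a - d <..< a + d} - {a}) \<inter> A) > 0"
      by (auto intro: null_setsI simp: zero_less_iff_neq_zero)
  qed
next
  assume "\<forall>\<delta>>0. emeasure lebesgue (({a - \<delta> <..< a + \<delta>} - {a}) \<inter> A) > 0"
  then show "\<forall>f L1 L2. T6_lim A f a L1 \<and> T6_lim A f a L2 \<longrightarrow> L1 = L2"
    by (metis T6_lim_distinct_imp_null_nbhd null_setsD1 order_less_irrefl)
qed

end
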